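(* Under the standing assumptions, for every $R>0$ there is $C(R)$ such that $|\nabla_vF(v,E)|\le C(R)\,\dfrac{M(v)}{1+|v|}$ for all $v\in\mathbb R^d$ and all $|E|\le R$.
   Context: Standing assumptions: $d\ge1$, $\alpha\in[1,2)$. $M:\mathbb R^d\to(0,\infty)$ satisfies $M(v)=M(-v)$, $\int M\,dv=1$, $|v|^{d+\alpha}M(v)\to\gamma>0$ as $|v|\to\infty$, $|\nabla_vM(v)|\le CM(v)/(1+|v|)$ and $|D_v^2M(v)|\le CM(v)$. The cross section $\sigma:\mathbb R^d\times\mathbb R^d\to\mathbb R$ satisfies $\sigma(v,v')=\sigma(v',v)$, $\nu_1\le\sigma\le\nu_2$ for constants $0<\nu_1\le\nu_2$, $|\nabla_v\sigma(v',v)|\le C/(1+|v|)$, and $|\sigma(v,v')-\nu_0|\le C/(1+|v|)$ for all $v,v'$, for some constant $\nu_0$. The collision frequency $\nu(v):=\int\sigma(v',v)M(v')\,dv'$ is assumed even. The linear Boltzmann operator is $Q(f)(v)=\int[\sigma(v,v')M(v)f(v')-\sigma(v',v)M(v')f(v)]\,dv'$. For a positive weight $w$, $L^2_{w^{-1}}$ denotes the $L^2$ space with norm $(\int|f|^2/w)^{1/2}$. For $E\in\mathbb R^d$, $F(\cdot,E)$ denotes the unique positive solution in $L^2_{M^{-1}}(\mathbb R^d)$ of $E\cdot\nabla_vF-Q(F)=0$, $\int F\,dv=1$. *)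

theory Defs
  imports "HOL-Analysis.Analysis"
begin

definition grad :: "('a::euclidean_space \<Rightarrow> real) \<Rightarrow> 'a \<Rightarrow> 'a" where
  "grad f v = (\<Sum>b\<in>Basis. frechet_derivative f (at v) b *\<^sub>R b)"

definition Qop :: "('a::euclidean_space \<Rightarrow> 'a \<Rightarrow> real) \<Rightarrow> ('a \<Rightarrow> real) \<Rightarrow> ('a \<Rightarrow> real) \<Rightarrow> 'a \<Rightarrow> real" where
  "Qop \<sigma> M f v = (LINT v'|lborel. \<sigma> v v' * M v * f v' - \<sigma> v' v * M v' * f v)"

text \<open>f is a positive solution in L^2_{M^{-1}} of  E . grad f - Q(f) = 0  with total mass 1
  (equation understood pointwise for differentiable f).\<close>
definition stationary_solution ::
  "('a::euclidean_space \<Rightarrow> 'a \<Rightarrow> real) \<Rightarrow> ('a \<Rightarrow> real) \<Rightarrow> 'a \<Rightarrow> ('a \<Rightarrow> real) \<Rightarrow> bool" where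
  "stationary_solution \<sigma> M E f \<longleftrightarrow>
     (\<forall>v. f v > 0) \<and> f \<in> borel_measurable lborel \<and>
     integrable lborel (\<lambda>v. (f v)\<^sup>2 / M v) \<and>
     integrable lborel f \<and> (LINT v|lborel. f v) = 1 \<and>
     (\<forall>v. f differentiable (at v)) \<and>
     (\<forall>v. E \<bullet> grad f v - Qop \<sigma> M f v = 0)"

end

theory Submission
  imports Defs
begin

text \<open>Write \<open>K f x = \<integral> \<sigma>(v', x) f(v') dv'\<close> and \<open>\<nu> = K M\<close>. Along the characteristic
  \<open>s \<mapsto> v - s E\<close> the equation \<open>E \<cdot> \<nabla>F = M K F - \<nu> F\<close> is a linear ODE, and Duhamel's formula
  gives \<open>F v = \<integral>\<^sub>0\<^sup>T exp(-A s) (M K F)(v - s E) ds + exp(-A T) F(v - T E)\<close> with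
  \<open>A s = \<integral>\<^sub>0\<^sup>s \<nu>(v - r E) dr \<ge> \<nu>\<^sub>1 s\<close>. The remainder is non-negative and, by translation
  invariance of Lebesgue measure, has integral at most \<open>exp(-\<nu>\<^sub>1 T)\<close>, so \<open>F\<close> is the limit of
  the Duhamel integrals. Each integrand is Lipschitz in \<open>v\<close> with local constant
  \<open>O(exp(-\<nu>\<^sub>1 s) (1 + s)\<^sup>k\<^sup>+\<^sup>2 M v / (1 + |v|))\<close>: this combines \<open>|\<nabla>\<sigma>| = O(1/(1 + |v|))\<close>,
  \<open>|\<nabla>M| = O(M/(1 + |v|))\<close> and the comparison \<open>M(v - s E) = O((1 + s |E|)\<^sup>k M v)\<close>, a consequence
  of the power tail of \<open>M\<close>. Integrating in \<open>s\<close> bounds the increments of \<open>F\<close>, hence its gradient.\<close>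

lemma frechet_derivative_eq_grad:
  fixes f :: "'a::euclidean_space \<Rightarrow> real"
  assumes "f differentiable (at x)"
  shows "frechet_derivative f (at x) h = grad f x \<bullet> h"
proof -
  have "bounded_linear (frechet_derivative f (at x))"
    using assms frechet_derivative_works has_derivative_bounded_linear by blast
  then interpret linear "frechet_derivative f (at x)" by (simp add: bounded_linear.linear)
  have "frechet_derivative f (at x) h = frechet_derivative f (at x) (\<Sum>b\<in>Basis. (h \<bullet> b) *\<^sub>R b)"
    by (simp add: euclidean_representation)
  also have "\<dots> = (\<Sum>b\<in>Basis. (h \<bullet> b) * frechet_derivative f (at x) b)"
    by (simp add: sum scale)
  also have "\<dots> = grad f x \<bullet> h"
    unfolding grad_def inner_sum_left by (auto intro!: sum.cong simp: inner_commute)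
  finally show ?thesis .
qed

lemma has_derivative_grad:
  fixes f :: "'a::euclidean_space \<Rightarrow> real"
  assumes "f differentiable (at x)"
  shows "(f has_derivative (\<lambda>h. grad f x \<bullet> h)) (at x)"
proof -
  have "frechet_derivative f (at x) = (\<lambda>h. grad f x \<bullet> h)"
    using frechet_derivative_eq_grad[OF assms] by auto
  then show ?thesis using assms frechet_derivative_works by metis
qed

lemma has_real_derivative_grad_line:
  fixes f :: "'a::euclidean_space \<Rightarrow> real"
  assumes "f differentiable (at (v + t *\<^sub>R u))"
  shows "((\<lambda>t. f (v + t *\<^sub>R u)) has_real_derivative grad f (v + t *\<^sub>R u) \<bullet> u) (at t)"
proof -
  have "((\<lambda>t. v + t *\<^sub>R u) has_derivative (\<lambda>h. h *\<^sub>R u)) (at t)"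
    by (auto intro!: derivative_eq_intros)
  from has_derivative_compose[OF this has_derivative_grad[OF assms]]
  have "((\<lambda>t. f (v + t *\<^sub>R u)) has_derivative (\<lambda>h. h * (grad f (v + t *\<^sub>R u) \<bullet> u))) (at t)"
    by simp
  moreover have "(\<lambda>h. h * (grad f (v + t *\<^sub>R u) \<bullet> u)) = (*) (grad f (v + t *\<^sub>R u) \<bullet> u)"
    by (auto simp: fun_eq_iff)
  ultimately show ?thesis by (simp add: has_field_derivative_def)
qed

lemma abs_diff_le_of_norm_grad_le:
  fixes f :: "'a::euclidean_space \<Rightarrow> real"
  assumes "convex S" "\<And>z. z \<in> S \<Longrightarrow> f differentiable (at z)"
    and "\<And>z. z \<in> S \<Longrightarrow> norm (grad f z) \<le> B" "x \<in> S" "y \<in> S"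
  shows "\<bar>f x - f y\<bar> \<le> B * norm (x - y)"
proof -
  have "norm (f x - f y) \<le> B * norm (x - y)"
  proof (rule differentiable_bound[OF assms(1) _ _ assms(4,5)])
    fix z assume z: "z \<in> S"
    show "(f has_derivative (\<lambda>h. grad f z \<bullet> h)) (at z within S)"
      using has_derivative_grad[OF assms(2)[OF z]] has_derivative_at_withinI by blast
    show "onorm (\<lambda>h. grad f z \<bullet> h) \<le> B"
      by (rule onorm_le) (metis Cauchy_Schwarz_ineq2 assms(3) mult_right_mono norm_ge_zero order_trans real_norm_def z)
  qed
  then show ?thesis by simp
qed

text \<open>A one-sided bound on the increments suffices, because the derivative in the
  direction of the gradient is its norm.\<close>
lemma norm_grad_le_of_increment_le:
  fixes f :: "'a::euclidean_space \<Rightarrow> real"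
  assumes "f differentiable (at v)" "0 < \<delta>" "0 \<le> L"
    and incr: "\<And>w. norm (w - v) < \<delta> \<Longrightarrow> f w - f v \<le> L * norm (w - v)"
  shows "norm (grad f v) \<le> L"
proof (cases "grad f v = 0")
  case True
  then show ?thesis using assms(3) by simp
next
  case False
  define u where "u = grad f v /\<^sub>R norm (grad f v)"
  have norm_u: "norm u = 1" using False by (simp add: u_def)
  have "grad f v \<bullet> u = norm (grad f v)"
    using False by (simp add: u_def power2_norm_eq_inner[symmetric] power2_eq_square)
  then have "((\<lambda>t. f (v + t *\<^sub>R u)) has_real_derivative norm (grad f v)) (at 0 within {0<..})"
    using has_real_derivative_grad_line[of f v 0 u] assms(1)
    by (auto intro: has_field_derivative_at_within)
  then have lim: "((\<lambda>t. (f (v + t *\<^sub>R u) - f v) / t) \<longlongrightarrow> norm (grad f v)) (at_right 0)"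
    by (simp add: has_field_derivative_iff)
  have "\<forall>\<^sub>F t in at_right 0. (f (v + t *\<^sub>R u) - f v) / t \<le> L"
    unfolding eventually_at_right_field
  proof (intro exI[of _ \<delta>] conjI allI impI)
    fix t :: real assume "0 < t" "t < \<delta>"
    then have "f (v + t *\<^sub>R u) - f v \<le> L * t" using incr[of "v + t *\<^sub>R u"] norm_u by simp
    then show "(f (v + t *\<^sub>R u) - f v) / t \<le> L" using \<open>0 < t\<close> by (simp add: divide_le_eq)
  qed (use assms(2) in simp)
  then show ?thesis by (rule tendsto_le[OF _ tendsto_const lim, rotated]) simp
qed

lemma isCont_of_local_lipschitz:
  fixes g :: "'a::real_normed_vector \<Rightarrow> real"
  assumes "0 < \<delta>" "\<And>y. norm (y - x) < \<delta> \<Longrightarrow> \<bar>g y - g x\<bar> \<le> L * norm (y - x)"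
  shows "isCont g x"
proof -
  have "((\<lambda>y. g y - g x) \<longlongrightarrow> 0) (at x)"
  proof (rule Lim_null_comparison)
    show "\<forall>\<^sub>F y in at x. norm (g y - g x) \<le> L * norm (y - x)"
      unfolding eventually_at using assms by (auto simp: dist_norm)
    show "((\<lambda>y. L * norm (y - x)) \<longlongrightarrow> 0) (at x)"
      by (intro tendsto_eq_intros) auto
  qed
  then show ?thesis by (simp add: isCont_def LIM_zero_iff)
qed

lemma continuous_nonneg_integral_eq_0_imp_eq_0:
  fixes f :: "'a::euclidean_space \<Rightarrow> real"
  assumes "continuous_on UNIV f" "\<And>x. 0 \<le> f x"
    and "integrable lborel f" "(LINT x|lborel. f x) = 0"
  shows "f x = 0"
proof -
  have "AE x in lborel. f x = 0"
    using integral_nonneg_eq_0_iff_AE[OF assms(3)] assms(2,4) by auto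
  then have ae: "AE x \<in> UNIV in lebesgue. x \<in> {x. f x = 0}"
    by (intro AE_completion) auto
  have "closed {x. f x = 0}"
    using assms(1) by (intro closed_Collect_eq continuous_intros) auto
  then show ?thesis using mem_closed_if_AE_lebesgue_open[OF open_UNIV _ ae] by auto
qed

lemma lborel_integral_translate:
  fixes f :: "'a::euclidean_space \<Rightarrow> real"
  assumes "integrable lborel f"
  shows "integrable lborel (\<lambda>v. f (v - a))" "(LINT v|lborel. f (v - a)) = (LINT v|lborel. f v)"
proof -
  have g: "(+) (- a) \<in> measurable lborel borel" by simp
  have f: "f \<in> borel_measurable borel" using borel_measurable_integrable[OF assms] by simp
  have "integrable (distr lborel borel ((+) (- a))) f" using assms by (simp add: lborel_distr_plus)
  then show "integrable lborel (\<lambda>v. f (v - a))"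
    using integrable_distr_eq[OF g f] by (simp add: add.commute)
  have "(LINT v|lborel. f (- a + v)) = integral\<^sup>L (distr lborel borel ((+) (- a))) f"
    using integral_distr[OF g f] by simp
  then show "(LINT v|lborel. f (v - a)) = (LINT v|lborel. f v)"
    by (simp add: lborel_distr_plus add.commute)
qed

lemma one_plus_norm_le_mult:
  fixes x z :: "'a::real_normed_vector"
  shows "1 + norm x \<le> (1 + norm z) * (1 + norm (x - z))"
proof -
  have "norm x \<le> norm z + norm (x - z)" using norm_triangle_ineq[of z "x - z"] by simp
  moreover have "(1 + norm z) * (1 + norm (x - z)) = 1 + norm z + norm (x - z) + norm z * norm (x - z)"
    by (simp add: algebra_simps)
  moreover have "0 \<le> norm z * norm (x - z)" by simp
  ultimately show ?thesis by linarith
qed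

lemma one_plus_norm_le_double:
  fixes x z :: "'a::real_normed_vector"
  assumes "norm (z - x) \<le> 1/2"
  shows "1 + norm x \<le> 2 * (1 + norm z)"
proof -
  have "1 + norm x \<le> (1 + norm z) * (1 + norm (z - x))"
    using one_plus_norm_le_mult[of x z] by (simp add: norm_minus_commute)
  also have "\<dots> \<le> (1 + norm z) * 2"
    using assms by (intro mult_left_mono) auto
  finally show ?thesis by simp
qed

lemma powr_tail_weight_bounds:
  fixes M :: "'a::euclidean_space \<Rightarrow> real"
  assumes pos: "\<And>v. 0 < M v" and cont: "continuous_on UNIV M" and "0 < \<gamma>" "0 \<le> N"
    and lim: "((\<lambda>v. norm v powr N * M v) \<longlongrightarrow> \<gamma>) at_infinity"
  obtains c1 c2 where "0 < c1" "\<And>z. c1 \<le> M z * (1 + norm z) powr N"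
    "\<And>z. M z * (1 + norm z) powr N \<le> c2"
proof -
  define g where "g z = M z * (1 + norm z) powr N" for z
  have g_pos: "0 < g z" for z
  proof -
    have "0 < 1 + norm z" by (simp add: add_pos_nonneg)
    then show ?thesis using pos[of z] by (simp add: g_def)
  qed
  have g_cont: "continuous_on UNIV g" unfolding g_def
    by (intro continuous_intros cont) (smt (verit) norm_ge_zero)
  have "\<forall>\<^sub>F v in at_infinity. norm v powr N * M v \<in> {\<gamma>/2<..<2*\<gamma>}"
    using lim \<open>0 < \<gamma>\<close> by (intro topological_tendstoD) auto
  then obtain \<rho>0 where \<rho>0: "\<And>z. \<rho>0 \<le> norm z \<Longrightarrow> norm z powr N * M z \<in> {\<gamma>/2<..<2*\<gamma>}"
    unfolding eventually_at_infinity by blast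
  define \<rho> where "\<rho> = max \<rho>0 1"
  have far: "\<gamma>/2 \<le> g z \<and> g z \<le> 2 powr N * (2*\<gamma>)" if "\<rho> \<le> norm z" for z
  proof -
    have z: "1 \<le> norm z" "\<rho>0 \<le> norm z" using that by (auto simp: \<rho>_def)
    have "norm z powr N \<le> (1 + norm z) powr N" "(1 + norm z) powr N \<le> (2 * norm z) powr N"
      using \<open>0 \<le> N\<close> z by (auto intro: powr_mono2)
    then have "norm z powr N * M z \<le> g z" "g z \<le> (2 * norm z) powr N * M z"
      unfolding g_def using pos[of z] by (auto simp: mult.commute)
    moreover have "(2 * norm z) powr N * M z = 2 powr N * (norm z powr N * M z)"
      by (simp add: powr_mult)
    ultimately show ?thesis using \<rho>0[OF z(2)] by (auto intro: order_trans)
  qed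
  have cpt: "compact (cball (0::'a) \<rho>)" and ne: "cball (0::'a) \<rho> \<noteq> {}"
    by (auto simp: \<rho>_def)
  obtain a where a: "\<And>y. y \<in> cball 0 \<rho> \<Longrightarrow> g a \<le> g y"
    using continuous_attains_inf[OF cpt ne continuous_on_subset[OF g_cont]] by blast
  obtain b where b: "\<And>y. y \<in> cball 0 \<rho> \<Longrightarrow> g y \<le> g b"
    using continuous_attains_sup[OF cpt ne continuous_on_subset[OF g_cont]] by blast
  have "min (g a) (\<gamma>/2) \<le> g z \<and> g z \<le> max (g b) (2 powr N * (2*\<gamma>))" for z
    using far[of z] a[of z] b[of z] by (cases "\<rho> \<le> norm z") auto
  moreover have "0 < min (g a) (\<gamma>/2)" using g_pos \<open>0 < \<gamma>\<close> by simp
  ultimately show ?thesis using that unfolding g_def by blast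
qed

lemma powr_tail_weight_ratio:
  fixes M :: "'a::euclidean_space \<Rightarrow> real"
  assumes pos: "\<And>v. 0 < M v" and "continuous_on UNIV M" "0 < \<gamma>" "0 \<le> N"
    and "((\<lambda>v. norm v powr N * M v) \<longlongrightarrow> \<gamma>) at_infinity"
  obtains C k where "0 < C" "\<And>z v. M z \<le> C * (1 + norm (z - v)) ^ k * M v"
proof -
  obtain c1 c2 where c1: "0 < c1" "\<And>z. c1 \<le> M z * (1 + norm z) powr N"
    and c2: "\<And>z. M z * (1 + norm z) powr N \<le> c2"
    using powr_tail_weight_bounds[OF assms] by blast
  have ratio: "M z \<le> c2 / c1 * (1 + norm (z - v)) ^ nat \<lceil>N\<rceil> * M v" for z v
  proof -
    have "(1 + norm v) powr N \<le> ((1 + norm z) * (1 + norm (v - z))) powr N"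
      using one_plus_norm_le_mult[of v z] \<open>0 \<le> N\<close> by (intro powr_mono2) auto
    also have "\<dots> = (1 + norm z) powr N * (1 + norm (z - v)) powr N"
      by (simp add: powr_mult norm_minus_commute)
    also have "(1 + norm (z - v)) powr N \<le> (1 + norm (z - v)) powr real (nat \<lceil>N\<rceil>)"
      by (intro powr_mono) (use \<open>0 \<le> N\<close> in linarith, simp)
    finally have "(1 + norm v) powr N \<le> (1 + norm z) powr N * (1 + norm (z - v)) ^ nat \<lceil>N\<rceil>"
      by (simp add: powr_realpow add_pos_nonneg mult_left_mono)
    then have "M z * c1 \<le> M z * (M v * ((1 + norm z) powr N * (1 + norm (z - v)) ^ nat \<lceil>N\<rceil>))"
      using c1(2)[of v] pos[of v] pos[of z]
      by (intro mult_left_mono) (auto intro: order_trans mult_left_mono)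
    also have "\<dots> = (M z * (1 + norm z) powr N) * ((1 + norm (z - v)) ^ nat \<lceil>N\<rceil> * M v)"
      by (simp add: algebra_simps)
    also have "\<dots> \<le> c2 * ((1 + norm (z - v)) ^ nat \<lceil>N\<rceil> * M v)"
      using c2[of z] pos[of v] by (intro mult_right_mono) auto
    finally show ?thesis using c1(1) by (simp add: field_simps)
  qed
  moreover have "0 < c2 / c1" using c1 c2[of 0] by (smt (verit) divide_pos_pos)
  ultimately show ?thesis using that by blast
qed

lemma poly_le_exp:
  fixes a :: real
  assumes "0 < a"
  obtains D where "0 < D" "\<And>s. 0 \<le> s \<Longrightarrow> (1 + s) ^ p \<le> D * exp (a * s)"
proof -
  define l where "l = a / (real p + 1)"
  have l: "0 < l" "real p * l \<le> a" using assms by (auto simp: l_def field_simps)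
  define D where "D = (1 + 1/l) ^ p"
  have "(1 + s) ^ p \<le> D * exp (a * s)" if s: "0 \<le> s" for s
  proof -
    have "1 + s \<le> (1 + 1/l) * (1 + l * s)" using l s by (simp add: field_simps)
    also have "\<dots> \<le> (1 + 1/l) * exp (l * s)"
      using l by (intro mult_left_mono exp_ge_add_one_self) auto
    finally have "(1 + s) ^ p \<le> ((1 + 1/l) * exp (l * s)) ^ p"
      using s by (intro power_mono) auto
    also have "\<dots> = D * exp (real p * l * s)"
      by (simp add: D_def power_mult_distrib exp_of_nat_mult mult.assoc)
    also have "\<dots> \<le> D * exp (a * s)"
      using l s by (auto simp: D_def intro!: mult_left_mono mult_right_mono)
    finally show ?thesis .
  qed
  moreover have "0 < D" using l by (simp add: D_def add_pos_pos)
  ultimately show ?thesis using that by blast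
qed

lemma integral_exp_poly_bounded:
  fixes a :: real
  assumes "0 < a"
  shows "\<exists>J. \<forall>T\<ge>0. integral {0..T} (\<lambda>s. exp (- a * s) * (1 + s) ^ p) \<le> J"
proof -
  obtain D where D: "0 < D" "\<And>s. 0 \<le> s \<Longrightarrow> (1 + s) ^ p \<le> D * exp (a / 2 * s)"
    using poly_le_exp[of "a / 2"] assms by auto
  have "integral {0..T} (\<lambda>s. exp (- a * s) * (1 + s) ^ p) \<le> 2 * D / a" if T: "0 \<le> T" for T
  proof -
    have "((\<lambda>s. D * exp (- (a / 2 * s))) has_integral
        (- (2 * D / a) * exp (- (a / 2 * T))) - (- (2 * D / a) * exp (- (a / 2 * 0)))) {0..T}"
    proof (rule fundamental_theorem_of_calculus[OF T])
      fix s assume "s \<in> {0..T}"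
      show "((\<lambda>s. - (2 * D / a) * exp (- (a / 2 * s))) has_vector_derivative D * exp (- (a / 2 * s)))
          (at s within {0..T})"
        unfolding has_real_derivative_iff_has_vector_derivative[symmetric]
        using assms by (auto intro!: derivative_eq_intros simp: field_simps)
    qed
    then have "integral {0..T} (\<lambda>s. D * exp (- (a / 2 * s)))
        = (- (2 * D / a) * exp (- (a / 2 * T))) - (- (2 * D / a) * exp (- (a / 2 * 0)))"
      by (rule integral_unique)
    then have int: "integral {0..T} (\<lambda>s. D * exp (- (a / 2 * s))) = 2 * D / a * (1 - exp (- (a / 2 * T)))"
      by (simp add: algebra_simps)
    have "integral {0..T} (\<lambda>s. exp (- a * s) * (1 + s) ^ p) \<le> integral {0..T} (\<lambda>s. D * exp (- (a / 2 * s)))"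
    proof (rule integral_le)
      fix s assume "s \<in> {0..T}"
      then have "exp (- a * s) * (1 + s) ^ p \<le> exp (- a * s) * (D * exp (a / 2 * s))"
        using D by (intro mult_left_mono) auto
      also have "\<dots> = D * exp (- (a / 2 * s))"
        by (simp add: exp_add[symmetric] mult.commute)
      finally show "exp (- a * s) * (1 + s) ^ p \<le> D * exp (- (a / 2 * s))" .
    qed (intro integrable_continuous_real continuous_intros)+
    also have "\<dots> \<le> 2 * D / a"
      unfolding int using D assms by (intro mult_left_le) auto
    finally show ?thesis .
  qed
  then show ?thesis by blast
qed

lemma abs_exp_neg_diff_le:
  fixes a b m :: real
  assumes "m \<le> a" "m \<le> b"
  shows "\<bar>exp (- a) - exp (- b)\<bar> \<le> exp (- m) * \<bar>a - b\<bar>"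
proof -
  have *: "exp (- x) - exp (- y) \<le> exp (- m) * (y - x)" if "m \<le> x" "x \<le> y" for x y
  proof -
    have "exp (- x) - exp (- y) = exp (- x) * (1 - exp (- (y - x)))"
      by (simp add: exp_diff exp_minus field_simps)
    also have "\<dots> \<le> exp (- x) * (y - x)"
    proof -
      have "1 - exp (x - y) \<le> y - x" using exp_ge_add_one_self[of "x - y"] by linarith
      then show ?thesis by (intro mult_left_mono) auto
    qed
    also have "\<dots> \<le> exp (- m) * (y - x)" using that by (intro mult_right_mono) auto
    finally show ?thesis .
  qed
  show ?thesis
    using *[OF assms(1)] *[OF assms(2)] by (cases "a \<le> b") (auto simp: abs_if)
qed

lemma abs_diff_mult3_le:
  fixes a b c a' b' c' :: real
  shows "\<bar>a * b * c - a' * b' * c'\<bar>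
    \<le> \<bar>a - a'\<bar> * \<bar>b\<bar> * \<bar>c\<bar> + \<bar>a'\<bar> * \<bar>b - b'\<bar> * \<bar>c\<bar> + \<bar>a'\<bar> * \<bar>b'\<bar> * \<bar>c - c'\<bar>"
proof -
  have "a * b * c - a' * b' * c' = (a - a') * b * c + a' * (b - b') * c + a' * b' * (c - c')"
    by (simp add: algebra_simps)
  then have "\<bar>a * b * c - a' * b' * c'\<bar>
      \<le> \<bar>(a - a') * b * c + a' * (b - b') * c\<bar> + \<bar>a' * b' * (c - c')\<bar>"
    by (metis abs_triangle_ineq)
  also have "\<dots> \<le> \<bar>(a - a') * b * c\<bar> + \<bar>a' * (b - b') * c\<bar> + \<bar>a' * b' * (c - c')\<bar>"
    using abs_triangle_ineq by simp
  finally show ?thesis by (simp add: abs_mult)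
qed

section \<open>The collision operator\<close>

definition prob_density :: "('a::euclidean_space \<Rightarrow> real) \<Rightarrow> bool" where
  "prob_density f \<longleftrightarrow> integrable lborel f \<and> (\<forall>v. 0 \<le> f v) \<and> (LINT v|lborel. f v) = 1"

locale kinetic =
  fixes M :: "'a::euclidean_space \<Rightarrow> real" and \<sigma> :: "'a \<Rightarrow> 'a \<Rightarrow> real"
    and \<nu>1 \<nu>2 C\<sigma> CM :: real
  assumes M_pos: "\<And>v. 0 < M v"
    and M_integrable: "integrable lborel M" and M_mass: "(LINT v|lborel. M v) = 1"
    and M_differentiable: "\<And>v. M differentiable (at v)"
    and norm_grad_M: "\<And>v. norm (grad M v) \<le> CM * M v / (1 + norm v)"
    and \<sigma>_measurable: "(\<lambda>(v, v'). \<sigma> v v') \<in> borel_measurable (lborel \<Otimes>\<^sub>M lborel)"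
    and \<sigma>_sym: "\<And>v v'. \<sigma> v v' = \<sigma> v' v"
    and \<nu>1_pos: "0 < \<nu>1"
    and \<sigma>_bounds: "\<And>v v'. \<nu>1 \<le> \<sigma> v v' \<and> \<sigma> v v' \<le> \<nu>2"
    and \<sigma>_differentiable: "\<And>v' v. \<sigma> v' differentiable (at v)"
    and norm_grad_\<sigma>: "\<And>v v'. norm (grad (\<sigma> v') v) \<le> C\<sigma> / (1 + norm v)"
begin

lemma M_density: "prob_density M"
  using M_integrable M_mass M_pos by (simp add: prob_density_def less_imp_le)

lemma M_continuous: "continuous_on UNIV M"
  by (intro continuous_at_imp_continuous_on ballI differentiable_imp_continuous_within M_differentiable)

lemma C\<sigma>_nonneg: "0 \<le> C\<sigma>"
proof -
  have "0 \<le> C\<sigma> / (1 + norm (0::'a))" using norm_grad_\<sigma>[of 0 0] norm_ge_zero order_trans by blast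
  then show ?thesis by simp
qed

lemma \<nu>2_nonneg: "0 \<le> \<nu>2"
  using \<sigma>_bounds[of 0 0] \<nu>1_pos by linarith

lemma \<sigma>_measurable_fst: "(\<lambda>v'. \<sigma> v' x) \<in> borel_measurable lborel"
proof -
  have "(\<lambda>v'. (\<lambda>(v, v'). \<sigma> v v') (v', x)) \<in> borel_measurable lborel"
    using \<sigma>_measurable by measurable
  then show ?thesis by simp
qed

lemma \<sigma>_lipschitz:
  assumes "norm (y - x) \<le> 1/2"
  shows "\<bar>\<sigma> v' y - \<sigma> v' x\<bar> \<le> 2 * C\<sigma> / (1 + norm x) * norm (y - x)"
proof (rule abs_diff_le_of_norm_grad_le[of "cball x (1/2)"])
  fix z assume "z \<in> cball x (1/2)"
  then have "1 + norm x \<le> 2 * (1 + norm z)"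
    by (intro one_plus_norm_le_double) (simp add: dist_norm norm_minus_commute)
  then have "2 * C\<sigma> / (2 * (1 + norm z)) \<le> 2 * C\<sigma> / (1 + norm x)"
    using C\<sigma>_nonneg by (intro divide_left_mono) (auto intro!: mult_pos_pos add_pos_nonneg)
  then have "C\<sigma> / (1 + norm z) \<le> 2 * C\<sigma> / (1 + norm x)"
    by (metis mult_divide_mult_cancel_left_if zero_neq_numeral)
  then show "norm (grad (\<sigma> v') z) \<le> 2 * C\<sigma> / (1 + norm x)"
    using norm_grad_\<sigma> order_trans by blast
qed (use assms \<sigma>_differentiable in \<open>auto simp: dist_norm norm_minus_commute\<close>)

text \<open>The operator \<open>K\<close>; \<open>Kavg M\<close> is the collision frequency \<open>\<nu>\<close>.\<close>
definition Kavg :: "('a \<Rightarrow> real) \<Rightarrow> 'a \<Rightarrow> real" where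
  "Kavg f x = (LINT v'|lborel. \<sigma> v' x * f v')"

lemma Kavg_integrable:
  assumes "integrable lborel f"
  shows "integrable lborel (\<lambda>v'. \<sigma> v' x * f v')"
proof (rule Bochner_Integration.integrable_bound[of _ "\<lambda>v'. \<nu>2 * norm (f v')"])
  show "(\<lambda>v'. \<sigma> v' x * f v') \<in> borel_measurable lborel"
    using \<sigma>_measurable_fst assms by measurable
  show "AE v' in lborel. norm (\<sigma> v' x * f v') \<le> norm (\<nu>2 * norm (f v'))"
  proof (intro AE_I2)
    fix v'
    have "\<bar>\<sigma> v' x\<bar> \<le> \<bar>\<nu>2\<bar>" using \<sigma>_bounds[of v' x] \<nu>1_pos by (auto simp: abs_le_iff)
    then show "norm (\<sigma> v' x * f v') \<le> norm (\<nu>2 * norm (f v'))"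
      by (simp add: abs_mult mult_right_mono)
  qed
qed (use assms in auto)

lemma Kavg_bounds:
  assumes "prob_density f"
  shows "\<nu>1 \<le> Kavg f x" "Kavg f x \<le> \<nu>2"
proof -
  have f: "integrable lborel f" "\<And>v. 0 \<le> f v" "(LINT v|lborel. f v) = 1"
    using assms by (auto simp: prob_density_def)
  have "(LINT v'|lborel. \<nu>1 * f v') \<le> Kavg f x"
    unfolding Kavg_def using f Kavg_integrable \<sigma>_bounds by (intro integral_mono) (auto intro!: mult_right_mono)
  moreover have "Kavg f x \<le> (LINT v'|lborel. \<nu>2 * f v')"
    unfolding Kavg_def using f Kavg_integrable \<sigma>_bounds by (intro integral_mono) (auto intro!: mult_right_mono)
  ultimately show "\<nu>1 \<le> Kavg f x" "Kavg f x \<le> \<nu>2" using f by simp_all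
qed

lemma Kavg_lipschitz:
  assumes "prob_density f" "norm (y - x) \<le> 1/2"
  shows "\<bar>Kavg f y - Kavg f x\<bar> \<le> 2 * C\<sigma> / (1 + norm x) * norm (y - x)"
proof -
  let ?L = "2 * C\<sigma> / (1 + norm x) * norm (y - x)"
  have f: "integrable lborel f" "\<And>v. 0 \<le> f v" "(LINT v|lborel. f v) = 1"
    using assms by (auto simp: prob_density_def)
  have int: "integrable lborel (\<lambda>v'. (\<sigma> v' y - \<sigma> v' x) * f v')"
    using Kavg_integrable[OF f(1)] by (simp add: left_diff_distrib)
  have "Kavg f y - Kavg f x = (LINT v'|lborel. (\<sigma> v' y - \<sigma> v' x) * f v')"
    unfolding Kavg_def using Kavg_integrable[OF f(1)]
    by (simp add: left_diff_distrib Bochner_Integration.integral_diff)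
  also have "\<bar>\<dots>\<bar> \<le> (LINT v'|lborel. \<bar>(\<sigma> v' y - \<sigma> v' x) * f v'\<bar>)"
    by (rule integral_abs_bound)
  also have "\<dots> \<le> (LINT v'|lborel. ?L * f v')"
  proof (rule integral_mono)
    fix v'
    show "\<bar>(\<sigma> v' y - \<sigma> v' x) * f v'\<bar> \<le> ?L * f v'"
      using mult_right_mono[OF \<sigma>_lipschitz[OF assms(2)] f(2)] f(2)[of v'] by (simp add: abs_mult)
  qed (use int f in auto)
  also have "\<dots> = ?L" using f by simp
  finally show ?thesis .
qed

lemma Kavg_continuous:
  assumes "prob_density f"
  shows "continuous_on UNIV (Kavg f)"
  using isCont_of_local_lipschitz[of "1/2", OF _ Kavg_lipschitz[OF assms]]
  by (simp add: continuous_at_imp_continuous_on)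

lemma Qop_eq_Kavg:
  assumes "integrable lborel f"
  shows "Qop \<sigma> M f v = M v * Kavg f v - Kavg M v * f v"
proof -
  have "Qop \<sigma> M f v = (LINT v'|lborel. M v * (\<sigma> v' v * f v') - f v * (\<sigma> v' v * M v'))"
    unfolding Qop_def using \<sigma>_sym[of v] by (simp add: algebra_simps)
  also have "\<dots> = M v * Kavg f v - f v * Kavg M v"
    unfolding Kavg_def using Kavg_integrable[OF assms, of v] Kavg_integrable[OF M_integrable, of v]
    by (simp add: Bochner_Integration.integral_diff)
  finally show ?thesis by simp
qed

end

section \<open>Duhamel's formula along characteristics\<close>

locale stationary = kinetic +
  fixes E :: 'a and F :: "'a \<Rightarrow> real"
  assumes solution: "stationary_solution \<sigma> M E F"
begin

lemma F_pos: "0 < F v"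
  and F_integrable: "integrable lborel F"
  and F_differentiable: "F differentiable (at v)"
  and F_density: "prob_density F"
  using solution by (auto simp: stationary_solution_def prob_density_def less_imp_le)

lemma F_continuous: "continuous_on UNIV F"
  by (intro continuous_at_imp_continuous_on ballI differentiable_imp_continuous_within F_differentiable)

lemma transport_eq: "grad F x \<bullet> E = M x * Kavg F x - Kavg M x * F x"
  using solution Qop_eq_Kavg[OF F_integrable, of x] by (simp add: stationary_solution_def inner_commute)

lemma continuous_on_characteristic:
  assumes "continuous_on UNIV g"
  shows "continuous_on S (\<lambda>r. g (v - r *\<^sub>R E))"
  by (intro continuous_on_compose2[OF assms] continuous_intros) auto

definition damping :: "'a \<Rightarrow> real \<Rightarrow> real" where
  "damping v s = integral {0..s} (\<lambda>r. Kavg M (v - r *\<^sub>R E))"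

definition duhamel_integrand :: "'a \<Rightarrow> real \<Rightarrow> real" where
  "duhamel_integrand v s = exp (- damping v s) * (M (v - s *\<^sub>R E) * Kavg F (v - s *\<^sub>R E))"

definition duhamel :: "'a \<Rightarrow> real \<Rightarrow> real" where
  "duhamel v T = integral {0..T} (duhamel_integrand v)"

lemma damping_has_derivative:
  assumes "s \<in> {0..T}"
  shows "(damping v has_real_derivative Kavg M (v - s *\<^sub>R E)) (at s within {0..T})"
  unfolding damping_def[abs_def]
  by (rule integral_has_real_derivative[OF continuous_on_characteristic[OF Kavg_continuous[OF M_density]] assms])

lemma damping_continuous: "continuous_on {0..T} (damping v)"
  using DERIV_continuous[OF damping_has_derivative] by (simp add: continuous_on_eq_continuous_within)

lemma damping_ge: "0 \<le> s \<Longrightarrow> \<nu>1 * s \<le> damping v s"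
  using integral_le[of "\<lambda>_. \<nu>1" "{0..s}" "\<lambda>r. Kavg M (v - r *\<^sub>R E)"]
    Kavg_bounds[OF M_density] continuous_on_characteristic[OF Kavg_continuous[OF M_density]]
  by (simp add: damping_def integrable_continuous_real mult.commute)

lemma duhamel_integrand_continuous: "continuous_on {0..T} (duhamel_integrand v)"
  unfolding duhamel_integrand_def
  by (intro continuous_intros damping_continuous continuous_on_characteristic
      M_continuous Kavg_continuous F_density)

lemma duhamel_integrand_pos: "0 < duhamel_integrand v s"
  unfolding duhamel_integrand_def using Kavg_bounds(1)[OF F_density] \<nu>1_pos M_pos
  by (smt (verit) exp_gt_zero mult_pos_pos)

lemma damped_characteristic_has_derivative:
  assumes "s \<in> {0..T}"
  shows "((\<lambda>s. F (v - s *\<^sub>R E) * exp (- damping v s)) has_vector_derivative - duhamel_integrand v s)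
    (at s within {0..T})"
proof -
  let ?x = "v - s *\<^sub>R E"
  have "((\<lambda>s. F (v + s *\<^sub>R (- E))) has_real_derivative grad F (v + s *\<^sub>R (- E)) \<bullet> (- E)) (at s)"
    by (rule has_real_derivative_grad_line[OF F_differentiable])
  then have dF: "((\<lambda>s. F (v - s *\<^sub>R E)) has_real_derivative - (grad F ?x \<bullet> E)) (at s within {0..T})"
    by (simp add: has_field_derivative_at_within)
  have dexp: "((\<lambda>s. exp (- damping v s)) has_real_derivative exp (- damping v s) * (- Kavg M ?x))
      (at s within {0..T})"
    by (rule DERIV_chain2[OF DERIV_exp]) (intro derivative_intros damping_has_derivative[OF assms])
  have "- (grad F ?x \<bullet> E) * exp (- damping v s) + exp (- damping v s) * (- Kavg M ?x) * F ?x
      = - duhamel_integrand v s"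
    unfolding duhamel_integrand_def transport_eq by (simp add: algebra_simps)
  then show ?thesis
    using DERIV_mult[OF dF dexp] by (simp add: has_real_derivative_iff_has_vector_derivative)
qed

lemma duhamel_formula:
  assumes "0 \<le> T"
  shows "duhamel v T = F v - F (v - T *\<^sub>R E) * exp (- damping v T)"
proof -
  have "((\<lambda>s. - duhamel_integrand v s) has_integral
      F (v - T *\<^sub>R E) * exp (- damping v T) - F v * exp (- damping v 0)) {0..T}"
    using fundamental_theorem_of_calculus[OF assms damped_characteristic_has_derivative] by simp
  from has_integral_neg[OF this] show ?thesis
    by (simp add: duhamel_def integral_unique damping_def)
qed

lemma duhamel_le_F: "0 \<le> T \<Longrightarrow> duhamel v T \<le> F v"
  using duhamel_formula[of T v] F_pos[of "v - T *\<^sub>R E"] by simp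

lemma duhamel_mono: "0 \<le> T1 \<Longrightarrow> T1 \<le> T2 \<Longrightarrow> duhamel v T1 \<le> duhamel v T2"
  unfolding duhamel_def using duhamel_integrand_pos
  by (intro integral_subset_le integrable_continuous_real duhamel_integrand_continuous)
    (auto intro: less_imp_le)

definition duhamel_lim :: "'a \<Rightarrow> real" where
  "duhamel_lim v = (SUP n. duhamel v (real n))"

lemma duhamel_incseq: "incseq (\<lambda>n. duhamel v (real n))"
  by (intro incseq_SucI duhamel_mono) auto

lemma duhamel_tendsto: "(\<lambda>n. duhamel v (real n)) \<longlonglongrightarrow> duhamel_lim v"
  unfolding duhamel_lim_def
  by (intro LIMSEQ_incseq_SUP duhamel_incseq bdd_aboveI[of _ "F v"]) (auto intro: duhamel_le_F)

lemma F_minus_duhamel_lim_le: "F v - duhamel_lim v \<le> exp (- \<nu>1 * real n) * F (v - real n *\<^sub>R E)"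
proof -
  have "F v - duhamel_lim v \<le> F v - duhamel v (real n)"
    using incseq_le[OF duhamel_incseq duhamel_tendsto] by simp
  also have "\<dots> = F (v - real n *\<^sub>R E) * exp (- damping v (real n))"
    by (simp add: duhamel_formula)
  also have "\<dots> \<le> F (v - real n *\<^sub>R E) * exp (- \<nu>1 * real n)"
    using damping_ge[of "real n" v] F_pos by (intro mult_left_mono) (auto intro: less_imp_le)
  finally show ?thesis by (simp add: mult.commute)
qed

lemma F_eq_duhamel_lim:
  assumes "continuous_on UNIV duhamel_lim"
  shows "F v = duhamel_lim v"
proof -
  define r where "r v = F v - duhamel_lim v" for v
  have r_nonneg: "0 \<le> r v" for v
    using LIMSEQ_le_const2[OF duhamel_tendsto] duhamel_le_F by (simp add: r_def)
  have r_le: "r v \<le> exp (- \<nu>1 * real n) * F (v - real n *\<^sub>R E)" for v n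
    unfolding r_def by (rule F_minus_duhamel_lim_le)
  have r_cont: "continuous_on UNIV r"
    unfolding r_def[abs_def] by (intro continuous_intros F_continuous assms)
  have r_int: "integrable lborel r"
  proof (rule Bochner_Integration.integrable_bound[OF F_integrable])
    show "r \<in> borel_measurable lborel" using borel_measurable_continuous_onI[OF r_cont] by simp
    show "AE x in lborel. norm (r x) \<le> norm (F x)"
      using r_le[of _ 0] r_nonneg by (intro AE_I2) (simp add: abs_of_pos[OF F_pos])
  qed
  have r_int_le: "(LINT v|lborel. r v) \<le> exp (- \<nu>1 * real n)" for n
  proof -
    note F_shift = lborel_integral_translate[OF F_integrable, of "real n *\<^sub>R E"]
    have "(LINT v|lborel. r v) \<le> (LINT v|lborel. exp (- \<nu>1 * real n) * F (v - real n *\<^sub>R E))"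
      using r_int F_shift r_le by (intro integral_mono) auto
    also have "\<dots> = exp (- \<nu>1 * real n)"
      using F_shift solution by (simp add: stationary_solution_def)
    finally show ?thesis .
  qed
  have "(\<lambda>n. exp (- \<nu>1) ^ n) \<longlonglongrightarrow> 0"
    using \<nu>1_pos by (intro LIMSEQ_power_zero) simp
  then have "(\<lambda>n. exp (- \<nu>1 * real n)) \<longlonglongrightarrow> 0"
    by (simp add: exp_of_nat_mult[symmetric] mult.commute)
  then have "(LINT v|lborel. r v) \<le> 0"
    by (rule LIMSEQ_le_const) (use r_int_le in auto)
  moreover have "0 \<le> (LINT v|lborel. r v)"
    using r_nonneg by (intro integral_nonneg_AE) auto
  ultimately show ?thesis
    using continuous_nonneg_integral_eq_0_imp_eq_0[OF r_cont r_nonneg r_int] by (simp add: r_def)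
qed

end

section \<open>Lipschitz bounds for the Duhamel integrals\<close>

locale kinetic_poly = kinetic +
  fixes C0 :: real and k :: nat and R :: real
  assumes C0_pos: "0 < C0" and R_nonneg: "0 \<le> R"
    and M_ratio: "\<And>z v. M z \<le> C0 * (1 + norm (z - v)) ^ k * M v"
begin

lemma CM_nonneg: "0 \<le> CM"
proof -
  have "0 \<le> CM * M 0 / (1 + norm (0::'a))" using norm_grad_M[of 0] norm_ge_zero order_trans by blast
  then show ?thesis using M_pos[of 0] by (simp add: zero_le_mult_iff)
qed

definition M_lip_const :: real where
  "M_lip_const = 2 * CM * C0 * (3/2) ^ k"

lemma M_lip_const_nonneg: "0 \<le> M_lip_const"
  unfolding M_lip_const_def using CM_nonneg C0_pos by simp

lemma M_lipschitz:
  assumes "norm (y - x) \<le> 1/2"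
  shows "\<bar>M y - M x\<bar> \<le> M_lip_const * M x / (1 + norm x) * norm (y - x)"
proof (rule abs_diff_le_of_norm_grad_le[of "cball x (1/2)"])
  fix z assume "z \<in> cball x (1/2)"
  then have zx: "norm (z - x) \<le> 1/2" by (simp add: dist_norm norm_minus_commute)
  have "M z \<le> C0 * (1 + norm (z - x)) ^ k * M x" by (rule M_ratio)
  also have "\<dots> \<le> C0 * (3/2) ^ k * M x"
    using zx C0_pos M_pos[of x] by (intro mult_right_mono mult_left_mono power_mono) auto
  finally have Mz: "M z \<le> C0 * (3/2) ^ k * M x" .
  have "norm (grad M z) \<le> CM * M z / (1 + norm z)" by (rule norm_grad_M)
  also have "\<dots> \<le> CM * (C0 * (3/2) ^ k * M x) / ((1 + norm x) / 2)"
  proof (rule frac_le)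
    show "0 \<le> CM * (C0 * (3/2) ^ k * M x)" using CM_nonneg C0_pos M_pos[of x] by simp
    show "CM * M z \<le> CM * (C0 * (3/2) ^ k * M x)" using Mz CM_nonneg by (rule mult_left_mono)
    show "(1 + norm x) / 2 \<le> 1 + norm z" using one_plus_norm_le_double[OF zx] by simp
  qed (simp add: add_pos_nonneg)
  also have "\<dots> = M_lip_const * M x / (1 + norm x)" by (simp add: M_lip_const_def field_simps)
  finally show "norm (grad M z) \<le> M_lip_const * M x / (1 + norm x)" .
qed (use assms M_differentiable in \<open>auto simp: dist_norm norm_minus_commute\<close>)

lemma M_near_le:
  assumes "norm (y - x) \<le> 1/2"
  shows "M y \<le> (1 + M_lip_const) * M x"
proof -
  have "norm (y - x) \<le> 1 + norm x" using assms norm_ge_zero[of x] by linarith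
  then have "norm (y - x) / (1 + norm x) \<le> 1" by (simp add: pos_divide_le_eq add_pos_nonneg)
  then have "M_lip_const * M x * (norm (y - x) / (1 + norm x)) \<le> M_lip_const * M x"
    using M_lip_const_nonneg M_pos[of x] by (intro mult_left_le) auto
  then show ?thesis using M_lipschitz[OF assms] by (simp add: algebra_simps abs_le_iff)
qed

text \<open>The bracket collects the three terms of the product rule for \<open>duhamel_integrand\<close>;
  \<open>(1 + R)\<^sup>k\<^sup>+\<^sup>2\<close> is the loss of weight along a characteristic of speed at most \<open>R\<close>.\<close>
definition integrand_const :: real where
  "integrand_const =
    C0 * (2 * C\<sigma> * \<nu>2 * (1 + M_lip_const) + M_lip_const * \<nu>2 + 2 * C\<sigma>) * (1 + R) ^ (k + 2)"

definition time_integral_bound :: real where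
  "time_integral_bound =
    (SOME J. \<forall>T\<ge>0. integral {0..T} (\<lambda>s. exp (- \<nu>1 * s) * (1 + s) ^ (k + 2)) \<le> J)"

lemma time_integral_le:
  "0 \<le> T \<Longrightarrow> integral {0..T} (\<lambda>s. exp (- \<nu>1 * s) * (1 + s) ^ (k + 2)) \<le> time_integral_bound"
  unfolding time_integral_bound_def
  using someI_ex[OF integral_exp_poly_bounded[OF \<nu>1_pos, of "k + 2"]] by blast

lemma time_integral_bound_nonneg: "0 \<le> time_integral_bound"
  using time_integral_le[of 0] by simp

lemma integrand_const_nonneg: "0 \<le> integrand_const"
  unfolding integrand_const_def
  using C0_pos C\<sigma>_nonneg M_lip_const_nonneg \<nu>2_nonneg R_nonneg by simp

end

locale stationary_bounded = stationary + kinetic_poly +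
  assumes E_le: "norm E \<le> R"
begin

lemma one_plus_norm_characteristic_le:
  assumes "0 \<le> r" "r \<le> s"
  shows "1 + norm (r *\<^sub>R E) \<le> (1 + R) * (1 + s)"
proof -
  have "norm (r *\<^sub>R E) \<le> s * R"
    using assms E_le R_nonneg by (simp add: mult_mono)
  then show ?thesis using assms R_nonneg by (simp add: algebra_simps)
qed

lemma inverse_weight_characteristic:
  assumes "0 \<le> r" "r \<le> s" "0 \<le> a"
  shows "a / (1 + norm (v - r *\<^sub>R E)) \<le> a * ((1 + R) * (1 + s)) / (1 + norm v)"
proof -
  have "1 + norm v \<le> (1 + norm (v - r *\<^sub>R E)) * (1 + norm (r *\<^sub>R E))"
    using one_plus_norm_le_mult[of v "v - r *\<^sub>R E"] by simp
  also have "\<dots> \<le> (1 + norm (v - r *\<^sub>R E)) * ((1 + R) * (1 + s))"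
    by (rule mult_left_mono[OF one_plus_norm_characteristic_le[OF assms(1,2)]]) simp
  finally have "1 + norm v \<le> (1 + norm (v - r *\<^sub>R E)) * ((1 + R) * (1 + s))" .
  from mult_left_mono[OF this assms(3)] show ?thesis
    by (simp add: divide_simps add_pos_nonneg mult_ac)
qed

lemma increment_weight_characteristic:
  assumes "0 \<le> s" "0 \<le> a"
  shows "a / (1 + norm (v - s *\<^sub>R E)) * norm (w - v)
    \<le> a * ((1 + R) * (1 + s)) * (norm (w - v) / (1 + norm v))"
  using mult_right_mono[OF inverse_weight_characteristic[of s s a v] norm_ge_zero[of "w - v"]] assms
  by simp

lemma damping_diff:
  assumes "norm (w - v) \<le> 1/2" "0 \<le> s"
  shows "\<bar>damping w s - damping v s\<bar>
    \<le> 2 * C\<sigma> * s * ((1 + R) * (1 + s)) * (norm (w - v) / (1 + norm v))"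
proof -
  let ?B = "2 * C\<sigma> * ((1 + R) * (1 + s)) * (norm (w - v) / (1 + norm v))"
  have cont: "continuous_on {0..s} (\<lambda>r. Kavg M (w - r *\<^sub>R E) - Kavg M (v - r *\<^sub>R E))"
    by (intro continuous_intros continuous_on_characteristic Kavg_continuous M_density)
  have "norm (Kavg M (w - r *\<^sub>R E) - Kavg M (v - r *\<^sub>R E)) \<le> ?B" if "r \<in> {0..s}" for r
  proof -
    have "\<bar>Kavg M (w - r *\<^sub>R E) - Kavg M (v - r *\<^sub>R E)\<bar> \<le> 2 * C\<sigma> / (1 + norm (v - r *\<^sub>R E)) * norm (w - v)"
      using Kavg_lipschitz[OF M_density, of "w - r *\<^sub>R E" "v - r *\<^sub>R E"] assms(1) by simp
    also have "\<dots> \<le> 2 * C\<sigma> * ((1 + R) * (1 + s)) / (1 + norm v) * norm (w - v)"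
      using inverse_weight_characteristic[of r s "2 * C\<sigma>" v] that C\<sigma>_nonneg by (intro mult_right_mono) auto
    finally show ?thesis by simp
  qed
  then have "norm (integral {0..s} (\<lambda>r. Kavg M (w - r *\<^sub>R E) - Kavg M (v - r *\<^sub>R E))) \<le> ?B * (s - 0)"
    using integral_bound[OF assms(2) cont] by blast
  moreover have "damping w s - damping v s
      = integral {0..s} (\<lambda>r. Kavg M (w - r *\<^sub>R E) - Kavg M (v - r *\<^sub>R E))"
    unfolding damping_def by (intro integral_diff[symmetric] integrable_continuous_real
        continuous_on_characteristic Kavg_continuous M_density)
  ultimately have "\<bar>damping w s - damping v s\<bar> \<le> ?B * s" by simp
  then show ?thesis by (simp add: algebra_simps)
qed

lemma exp_damping_diff:
  assumes "norm (w - v) \<le> 1/2" "0 \<le> s"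
  shows "\<bar>exp (- damping w s) - exp (- damping v s)\<bar>
    \<le> exp (- \<nu>1 * s) * (2 * C\<sigma> * s * ((1 + R) * (1 + s)) * (norm (w - v) / (1 + norm v)))"
proof -
  have "\<bar>exp (- damping w s) - exp (- damping v s)\<bar> \<le> exp (- (\<nu>1 * s)) * \<bar>damping w s - damping v s\<bar>"
    by (rule abs_exp_neg_diff_le[OF damping_ge damping_ge]) (use assms in auto)
  then show ?thesis
    using mult_left_mono[OF damping_diff[OF assms], of "exp (- (\<nu>1 * s))"] by simp
qed

lemma M_characteristic_diff:
  assumes "norm (w - v) \<le> 1/2" "0 \<le> s"
  shows "\<bar>M (w - s *\<^sub>R E) - M (v - s *\<^sub>R E)\<bar>
    \<le> M_lip_const * M (v - s *\<^sub>R E) * ((1 + R) * (1 + s)) * (norm (w - v) / (1 + norm v))"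
  using M_lipschitz[of "w - s *\<^sub>R E" "v - s *\<^sub>R E"] assms M_lip_const_nonneg M_pos
    increment_weight_characteristic[of s "M_lip_const * M (v - s *\<^sub>R E)" v w]
  by (simp add: less_imp_le)

lemma Kavg_F_characteristic_diff:
  assumes "norm (w - v) \<le> 1/2" "0 \<le> s"
  shows "\<bar>Kavg F (w - s *\<^sub>R E) - Kavg F (v - s *\<^sub>R E)\<bar>
    \<le> 2 * C\<sigma> * ((1 + R) * (1 + s)) * (norm (w - v) / (1 + norm v))"
  using Kavg_lipschitz[OF F_density, of "w - s *\<^sub>R E" "v - s *\<^sub>R E"] assms C\<sigma>_nonneg
    increment_weight_characteristic[of s "2 * C\<sigma>" v w]
  by simp

lemma M_characteristic_le:
  assumes "0 \<le> s"
  shows "M (v - s *\<^sub>R E) \<le> C0 * ((1 + R) * (1 + s)) ^ k * M v"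
proof -
  have "M (v - s *\<^sub>R E) \<le> C0 * (1 + norm (s *\<^sub>R E)) ^ k * M v"
    using M_ratio[of "v - s *\<^sub>R E" v] by simp
  also have "\<dots> \<le> C0 * ((1 + R) * (1 + s)) ^ k * M v"
    using one_plus_norm_characteristic_le[of s s] assms C0_pos M_pos[of v]
    by (intro mult_right_mono mult_left_mono power_mono) auto
  finally show ?thesis .
qed

lemma duhamel_integrand_diff:
  assumes d: "norm (w - v) \<le> 1/2" and s: "0 \<le> s"
  shows "\<bar>duhamel_integrand w s - duhamel_integrand v s\<bar>
    \<le> integrand_const * (exp (- \<nu>1 * s) * (1 + s) ^ (k + 2)) * (M v / (1 + norm v) * norm (w - v))"
proof -
  define x y where "x = v - s *\<^sub>R E" and "y = w - s *\<^sub>R E"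
  define q u e where "q = (1 + R) * (1 + s)" and "u = norm (w - v) / (1 + norm v)"
    and "e = exp (- \<nu>1 * s)"
  define ew ev where "ew = exp (- damping w s)" and "ev = exp (- damping v s)"
  have yx: "norm (y - x) \<le> 1/2" using d by (simp add: x_def y_def)
  have q: "1 \<le> q" "s \<le> q" unfolding q_def using s R_nonneg by (auto simp: algebra_simps)
  have nonneg: "0 \<le> u" "0 \<le> e" "0 \<le> ev" "0 \<le> M x" "0 \<le> M y" "0 \<le> C\<sigma>" "0 \<le> M_lip_const"
    using M_pos C\<sigma>_nonneg M_lip_const_nonneg by (auto simp: u_def e_def ev_def less_imp_le)
  have K: "0 \<le> Kavg F z" "Kavg F z \<le> \<nu>2" for z
    using Kavg_bounds[OF F_density, of z] \<nu>1_pos by auto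
  have ev: "ev \<le> e" using damping_ge[OF s, of v] by (simp add: e_def ev_def)
  have de: "\<bar>ew - ev\<bar> \<le> e * (2 * C\<sigma> * s * q * u)"
    using exp_damping_diff[OF d s] by (simp add: e_def ew_def ev_def q_def u_def)
  have dM: "\<bar>M y - M x\<bar> \<le> M_lip_const * M x * q * u"
    using M_characteristic_diff[OF d s] by (simp add: x_def y_def q_def u_def)
  have dK: "\<bar>Kavg F y - Kavg F x\<bar> \<le> 2 * C\<sigma> * q * u"
    using Kavg_F_characteristic_diff[OF d s] by (simp add: x_def y_def q_def u_def)
  have My: "M y \<le> (1 + M_lip_const) * M x" by (rule M_near_le[OF yx])
  have Mx: "M x \<le> C0 * q ^ k * M v"
    using M_characteristic_le[OF s] by (simp add: x_def q_def)
  have "\<bar>duhamel_integrand w s - duhamel_integrand v s\<bar>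
      \<le> \<bar>ew - ev\<bar> * M y * Kavg F y + ev * \<bar>M y - M x\<bar> * Kavg F y + ev * M x * \<bar>Kavg F y - Kavg F x\<bar>"
    using abs_diff_mult3_le[of ew "M y" "Kavg F y" ev "M x" "Kavg F x"] nonneg K
    by (simp add: duhamel_integrand_def x_def y_def ew_def ev_def mult.assoc)
  also have "\<dots> \<le> e * (2 * C\<sigma> * s * q * u) * ((1 + M_lip_const) * M x) * \<nu>2
      + e * (M_lip_const * M x * q * u) * \<nu>2 + e * M x * (2 * C\<sigma> * q * u)"
    using de dM dK My ev nonneg K s q by (intro add_mono mult_mono) (auto intro!: mult_nonneg_nonneg)
  also have "\<dots> = e * q * u * M x * (2 * C\<sigma> * s * (1 + M_lip_const) * \<nu>2 + M_lip_const * \<nu>2 + 2 * C\<sigma>)"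
    by (simp add: algebra_simps)
  also have "\<dots> \<le> e * q * u * (C0 * q ^ k * M v)
      * (q * (2 * C\<sigma> * \<nu>2 * (1 + M_lip_const) + M_lip_const * \<nu>2 + 2 * C\<sigma>))"
  proof (intro mult_mono mult_left_mono Mx)
    have "s * (2 * C\<sigma> * \<nu>2 * (1 + M_lip_const)) \<le> q * (2 * C\<sigma> * \<nu>2 * (1 + M_lip_const))"
      using q nonneg \<nu>2_nonneg by (intro mult_right_mono) auto
    moreover have "1 * (M_lip_const * \<nu>2 + 2 * C\<sigma>) \<le> q * (M_lip_const * \<nu>2 + 2 * C\<sigma>)"
      using nonneg \<nu>2_nonneg by (intro mult_right_mono[OF q(1)]) auto
    ultimately show "2 * C\<sigma> * s * (1 + M_lip_const) * \<nu>2 + M_lip_const * \<nu>2 + 2 * C\<sigma>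
      \<le> q * (2 * C\<sigma> * \<nu>2 * (1 + M_lip_const) + M_lip_const * \<nu>2 + 2 * C\<sigma>)"
      by (simp add: algebra_simps)
  qed (use nonneg q s \<nu>2_nonneg C0_pos M_pos[of v] in \<open>auto intro!: mult_nonneg_nonneg add_nonneg_nonneg\<close>)
  also have "\<dots> = C0 * (2 * C\<sigma> * \<nu>2 * (1 + M_lip_const) + M_lip_const * \<nu>2 + 2 * C\<sigma>)
      * (q ^ k * q * q) * e * (M v * u)"
    by (simp add: mult_ac)
  also have "q ^ k * q * q = (1 + R) ^ (k + 2) * (1 + s) ^ (k + 2)"
    unfolding q_def power_mult_distrib[symmetric] by (simp add: power_add power2_eq_square mult.assoc)
  also have "C0 * (2 * C\<sigma> * \<nu>2 * (1 + M_lip_const) + M_lip_const * \<nu>2 + 2 * C\<sigma>)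
      * ((1 + R) ^ (k + 2) * (1 + s) ^ (k + 2)) * e * (M v * u)
      = integrand_const * (e * (1 + s) ^ (k + 2)) * (M v / (1 + norm v) * norm (w - v))"
    by (simp add: integrand_const_def u_def mult_ac)
  finally show ?thesis by (simp add: e_def)
qed

lemma duhamel_diff:
  assumes d: "norm (w - v) \<le> 1/2" and T: "0 \<le> T"
  shows "\<bar>duhamel w T - duhamel v T\<bar>
    \<le> integrand_const * time_integral_bound * (M v / (1 + norm v) * norm (w - v))"
proof -
  define c where "c = integrand_const * (M v / (1 + norm v) * norm (w - v))"
  have c: "0 \<le> c"
    using integrand_const_nonneg M_pos[of v] by (simp add: c_def add_pos_nonneg less_imp_le)
  have "duhamel w T - duhamel v T = integral {0..T} (\<lambda>s. duhamel_integrand w s - duhamel_integrand v s)"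
    unfolding duhamel_def
    by (intro integral_diff[symmetric] integrable_continuous_real duhamel_integrand_continuous)
  also have "norm \<dots> \<le> integral {0..T} (\<lambda>s. c * (exp (- \<nu>1 * s) * (1 + s) ^ (k + 2)))"
  proof (rule integral_norm_bound_integral)
    fix s assume "s \<in> {0..T}"
    then show "norm (duhamel_integrand w s - duhamel_integrand v s) \<le> c * (exp (- \<nu>1 * s) * (1 + s) ^ (k + 2))"
      using duhamel_integrand_diff[OF d, of s] by (simp add: c_def mult_ac)
  qed (intro integrable_continuous_real continuous_intros duhamel_integrand_continuous)+
  also have "\<dots> \<le> c * time_integral_bound"
    using time_integral_le[OF T] c by (simp add: mult_left_mono)
  finally show ?thesis by (simp add: c_def mult_ac)
qed

lemma duhamel_lim_diff:
  assumes "norm (w - v) \<le> 1/2"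
  shows "\<bar>duhamel_lim w - duhamel_lim v\<bar>
    \<le> integrand_const * time_integral_bound * (M v / (1 + norm v) * norm (w - v))"
proof (rule LIMSEQ_le_const2)
  show "(\<lambda>n. \<bar>duhamel w (real n) - duhamel v (real n)\<bar>) \<longlonglongrightarrow> \<bar>duhamel_lim w - duhamel_lim v\<bar>"
    by (intro tendsto_intros duhamel_tendsto)
qed (use duhamel_diff[OF assms] in auto)

lemma duhamel_lim_continuous: "continuous_on UNIV duhamel_lim"
proof -
  have "isCont duhamel_lim v" for v
    using duhamel_lim_diff
    by (intro isCont_of_local_lipschitz[of "1/2" _ _ "integrand_const * time_integral_bound * (M v / (1 + norm v))"])
      (auto simp: mult_ac)
  then show ?thesis by (simp add: continuous_at_imp_continuous_on)
qed

lemma norm_grad_F_le: "norm (grad F v) \<le> integrand_const * time_integral_bound * M v / (1 + norm v)"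
proof -
  let ?L = "integrand_const * time_integral_bound * (M v / (1 + norm v))"
  have "F w - F v \<le> ?L * norm (w - v)" if "norm (w - v) < 1/2" for w
    using duhamel_lim_diff[of w v] that F_eq_duhamel_lim[OF duhamel_lim_continuous]
    by (simp add: mult_ac abs_le_iff)
  moreover have "0 \<le> ?L"
    using integrand_const_nonneg time_integral_bound_nonneg M_pos[of v] by (simp add: add_pos_nonneg less_imp_le)
  ultimately show ?thesis
    using norm_grad_le_of_increment_le[OF F_differentiable, of "1/2" ?L] by simp
qed

end

lemma (in kinetic_poly) norm_grad_stationary_solution_le:
  assumes "norm E \<le> R" "stationary_solution \<sigma> M E f"
  shows "norm (grad f v) \<le> integrand_const * time_integral_bound * M v / (1 + norm v)"
proof -
  interpret stationary_bounded M \<sigma> \<nu>1 \<nu>2 C\<sigma> CM E f C0 k R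
    by unfold_locales (use assms in auto)
  show ?thesis by (rule norm_grad_F_le)
qed

theorem lemma2p10:
  fixes M :: "'a::euclidean_space \<Rightarrow> real"
    and \<sigma> :: "'a \<Rightarrow> 'a \<Rightarrow> real"
    and F :: "'a \<Rightarrow> 'a \<Rightarrow> real"
    and \<alpha> \<gamma> \<nu>\<^sub>0 \<nu>\<^sub>1 \<nu>\<^sub>2 :: real
  assumes alpha: "1 \<le> \<alpha>" "\<alpha> < 2"
    and M_pos: "\<forall>v. M v > 0"
    and M_even: "\<forall>v. M (- v) = M v"
    and M_meas: "M \<in> borel_measurable lborel"
    and M_int: "integrable lborel M" "(LINT v|lborel. M v) = 1"
    and M_tail: "\<gamma> > 0" "((\<lambda>v. norm v powr (real DIM('a) + \<alpha>) * M v) \<longlongrightarrow> \<gamma>) at_infinity"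
    and M_diff: "\<forall>v. M differentiable (at v)" "\<forall>v. grad M differentiable (at v)"
    and M_bounds: "\<exists>C. \<forall>v. norm (grad M v) \<le> C * M v / (1 + norm v) \<and>
                          onorm (frechet_derivative (grad M) (at v)) \<le> C * M v"
    and sigma_meas: "(\<lambda>(v, v'). \<sigma> v v') \<in> borel_measurable (lborel \<Otimes>\<^sub>M lborel)"
    and sigma_sym: "\<forall>v v'. \<sigma> v v' = \<sigma> v' v"
    and nu_pos: "0 < \<nu>\<^sub>1" "\<nu>\<^sub>1 \<le> \<nu>\<^sub>2"
    and sigma_bounds: "\<forall>v v'. \<nu>\<^sub>1 \<le> \<sigma> v v' \<and> \<sigma> v v' \<le> \<nu>\<^sub>2"
    and sigma_diff: "\<forall>v' v. \<sigma> v' differentiable (at v)"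
    and sigma_grad: "\<exists>C. \<forall>v v'. norm (grad (\<sigma> v') v) \<le> C / (1 + norm v)"
    and sigma_lim: "\<exists>C. \<forall>v v'. \<bar>\<sigma> v v' - \<nu>\<^sub>0\<bar> \<le> C / (1 + norm v)"
    and nu_even: "\<forall>v. (LINT v'|lborel. \<sigma> v' (- v) * M v') = (LINT v'|lborel. \<sigma> v' v * M v')"
    and F_sol: "\<forall>E. stationary_solution \<sigma> M E (F E)"
  shows "\<forall>R>0. \<exists>C. \<forall>E v. norm E \<le> R \<longrightarrow>
           norm (grad (F E) v) \<le> C * M v / (1 + norm v)"
proof (intro allI impI)
  fix R :: real assume "R > 0"
  obtain CM where CM: "\<And>v. norm (grad M v) \<le> CM * M v / (1 + norm v)"
    using M_bounds by blast
  obtain C\<sigma> where C\<sigma>: "\<And>v v'. norm (grad (\<sigma> v') v) \<le> C\<sigma> / (1 + norm v)"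
    using sigma_grad by blast
  interpret kinetic M \<sigma> \<nu>\<^sub>1 \<nu>\<^sub>2 C\<sigma> CM
    by unfold_locales
      (use M_pos M_int M_diff(1) CM sigma_meas sigma_sym nu_pos sigma_bounds sigma_diff C\<sigma> in auto)
  have "0 \<le> real DIM('a) + \<alpha>" using alpha(1) by simp
  then obtain C0 k where "0 < C0" "\<And>z v. M z \<le> C0 * (1 + norm (z - v)) ^ k * M v"
    using powr_tail_weight_ratio[OF M_pos[rule_format] M_continuous M_tail(1) _ M_tail(2)] by blast
  then interpret kinetic_poly M \<sigma> \<nu>\<^sub>1 \<nu>\<^sub>2 C\<sigma> CM C0 k R
    by unfold_locales (use \<open>R > 0\<close> in auto)
  show "\<exists>C. \<forall>E v. norm E \<le> R \<longrightarrow> norm (grad (F E) v) \<le> C * M v / (1 + norm v)"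
    using norm_grad_stationary_solution_le F_sol by blast
qed

end
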